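(* Let $G$ be a simple graph with $m$ edges and girth $g(G)\ge 4$. Define $\varrho_1(G)=\sum_{uv\in E(G)} m(G-\{u,v\})\,M_1(G-\{u,v\})$, where $m(H)$ is the number of edges of $H$. Then $$\varrho_1(G)=(m^2+4m+5)M_1(G)-(m+2)F(G)-(4m+6)M_2(G)+M_1^4(G)-M_1(G)^2+\alpha(G)-2m^2-2m+2\gamma(G),$$ where $M_1(G)^2$ denotes the square of the number $M_1(G)$.
   Context: All graphs are finite, simple and undirected; $d_G(v)$ is the degree of $v$; $G-\{u,v\}$ is obtained by deleting vertices $u,v$. $M_1^\alpha(G)=\sum_{v}d_G(v)^\alpha$ (exponent on degrees), $M_1=M_1^2$, $F=M_1^3$; $M_2(G)=\sum_{uv\in E(G)}d_G(u)d_G(v)$; $\alpha(G)=\sum_{uv\in E(G)}d_G(u)d_G(v)[d_G(u)+d_G(v)]$. A vertex $v$ is said to be incident to an edge $e=xy$ (with $v\ne x,y$) if $\{vx,vy\}\cap E(G)\neq\emptyset$; $\Lambda(G)$ is the set of all pairs $\{v,e\}$ with $v\in V(G)$, $e\in E(G)$ and $v$ incident to $e$ in this sense; and $\gamma(G)=\sum_{\{v,xy\}\in\Lambda(G)}d_G(v)\big[d_G(x)+d_G(y)\big]$. *)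

theory Defs
  imports Main
begin

definition simple_graph :: "'a set \<Rightarrow> 'a set set \<Rightarrow> bool" where
  "simple_graph V E \<longleftrightarrow> finite V \<and> (\<forall>e\<in>E. \<exists>x y. x \<noteq> y \<and> x \<in> V \<and> y \<in> V \<and> e = {x, y})"

definition deg :: "'a set set \<Rightarrow> 'a \<Rightarrow> nat" where
  "deg E v = card {e \<in> E. v \<in> e}"

definition girth_ge4 :: "'a set set \<Rightarrow> bool" where
  "girth_ge4 E \<longleftrightarrow> \<not> (\<exists>x y z. {x, y} \<in> E \<and> {y, z} \<in> E \<and> {x, z} \<in> E \<and> x \<noteq> y \<and> y \<noteq> z \<and> x \<noteq> z)"

definition del_verts_V :: "'a set \<Rightarrow> 'a set \<Rightarrow> 'a set" where
  "del_verts_V V S = V - S"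

definition del_verts_E :: "'a set set \<Rightarrow> 'a set \<Rightarrow> 'a set set" where
  "del_verts_E E S = {e \<in> E. e \<inter> S = {}}"

definition M1pow :: "'a set \<Rightarrow> 'a set set \<Rightarrow> nat \<Rightarrow> int" where
  "M1pow V E k = (\<Sum>v\<in>V. int (deg E v) ^ k)"

abbreviation M1 :: "'a set \<Rightarrow> 'a set set \<Rightarrow> int" where
  "M1 V E \<equiv> M1pow V E 2"

abbreviation Fidx :: "'a set \<Rightarrow> 'a set set \<Rightarrow> int" where
  "Fidx V E \<equiv> M1pow V E 3"

definition M2 :: "'a set set \<Rightarrow> int" where
  "M2 E = (\<Sum>e\<in>E. \<Prod>x\<in>e. int (deg E x))"

definition alpha_idx :: "'a set set \<Rightarrow> int" where
  "alpha_idx E = (\<Sum>e\<in>E. (\<Prod>x\<in>e. int (deg E x)) * (\<Sum>x\<in>e. int (deg E x)))"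

definition Lambda :: "'a set \<Rightarrow> 'a set set \<Rightarrow> ('a \<times> 'a set) set" where
  "Lambda V E = {(v, e). v \<in> V \<and> e \<in> E \<and> v \<notin> e \<and> (\<exists>x\<in>e. {v, x} \<in> E)}"

definition gamma_idx :: "'a set \<Rightarrow> 'a set set \<Rightarrow> int" where
  "gamma_idx V E = (\<Sum>(v, e)\<in>Lambda V E. int (deg E v) * (\<Sum>x\<in>e. int (deg E x)))"

definition rho1 :: "'a set \<Rightarrow> 'a set set \<Rightarrow> int" where
  "rho1 V E = (\<Sum>e\<in>E. int (card (del_verts_E E e)) * M1 (del_verts_V V e) (del_verts_E E e))"

end

theory Submission
  imports Defs
begin

text \<open>Deleting both ends of an edge \<open>uv\<close> removes \<open>d(u) + d(v) - 1\<close> edges. Since \<open>G\<close> has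
  no triangles, no other vertex is adjacent to both \<open>u\<close> and \<open>v\<close>, so exactly the
  \<open>d(u) + d(v) - 2\<close> vertices of \<open>\<Lambda>(uv) = (N(u) - v) \<union> (N(v) - u)\<close> lose one unit of degree.
  Hence each summand of \<open>\<rho>\<^sub>1\<close> is a polynomial in \<open>d(u)\<close>, \<open>d(v)\<close> and the sum \<open>t(uv)\<close> of the
  degrees over \<open>\<Lambda>(uv)\<close>. Summing over the edges with \<open>\<Sum> (f(u) + f(v)) = \<Sum>\<^sub>v d(v) f(v)\<close>
  produces the degree indices, the terms \<open>(d(u) + d(v)) t(uv)\<close> add up to \<open>\<gamma>\<close>, and the
  disjoint decomposition of \<open>\<Lambda>(uv)\<close> gives \<open>\<Sum> t(uv) = 2 M\<^sub>2 - M\<^sub>1\<close>.\<close>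

locale finite_simple_graph =
  fixes V :: "'a set" and E :: "'a set set"
  assumes simple: "simple_graph V E"
begin

abbreviation d :: "'a \<Rightarrow> int" where "d x \<equiv> int (deg E x)"

definition nbrs :: "'a \<Rightarrow> 'a set" where
  "nbrs x = {w. {x, w} \<in> E}"

definition nbrs_deg_sum :: "'a \<Rightarrow> int" where
  "nbrs_deg_sum x = (\<Sum>w\<in>nbrs x. d w)"

definition incident_verts :: "'a set \<Rightarrow> 'a set" where
  "incident_verts e = {w\<in>V. w \<notin> e \<and> (\<exists>x\<in>e. {w, x} \<in> E)}"

lemma finite_V: "finite V"
  using simple by (simp add: simple_graph_def)

lemma edgeE:
  assumes "e \<in> E"
  obtains u v where "u \<noteq> v" "u \<in> V" "v \<in> V" "e = {u, v}"
  using simple assms by (auto simp: simple_graph_def)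

lemma edge_subset: "e \<in> E \<Longrightarrow> e \<subseteq> V"
  by (erule edgeE) auto

lemma finite_E: "finite E"
  using finite_V edge_subset by (meson PowI finite_Pow_iff finite_subset subsetI)

lemma edge_distinct: "{x, y} \<in> E \<Longrightarrow> x \<noteq> y"
  by (erule edgeE) (metis doubleton_eq_iff insert_absorb2)

lemma edge_eq_if_mem: "u \<noteq> v \<Longrightarrow> f \<in> E \<Longrightarrow> u \<in> f \<Longrightarrow> v \<in> f \<Longrightarrow> f = {u, v}"
  by (erule edgeE[of f]) auto

lemma mem_nbrs_iff: "w \<in> nbrs x \<longleftrightarrow> {w, x} \<in> E"
  by (simp add: nbrs_def insert_commute)

lemma nbrs_subset: "nbrs x \<subseteq> V"
  using edge_subset by (auto simp: nbrs_def)

lemma finite_nbrs: "finite (nbrs x)"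
  using nbrs_subset finite_V finite_subset by blast

lemma not_mem_nbrs_self: "x \<notin> nbrs x"
  using edge_distinct[of x x] by (auto simp: nbrs_def)

lemma edge_other_end: "f \<in> E \<Longrightarrow> x \<in> f \<Longrightarrow> \<exists>w. f = {x, w}"
  by (erule edgeE) (metis insert_commute insertE singletonD)

lemma bij_betw_nbrs_incident_edges: "bij_betw (\<lambda>w. {x, w}) (nbrs x) {e\<in>E. x \<in> e}"
proof (rule bij_betwI')
  fix a b assume "a \<in> nbrs x" "b \<in> nbrs x"
  then show "({x, a} = {x, b}) = (a = b)"
    using not_mem_nbrs_self by (metis doubleton_eq_iff)
next
  fix y assume "y \<in> {e\<in>E. x \<in> e}"
  then show "\<exists>w\<in>nbrs x. y = {x, w}"
    using edge_other_end by (fastforce simp: nbrs_def)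
qed (simp add: nbrs_def)

lemma card_nbrs: "card (nbrs x) = deg E x"
  unfolding deg_def using bij_betw_same_card[OF bij_betw_nbrs_incident_edges] .

lemma sum_edges_ends_eq_sum_verts:
  "(\<Sum>e\<in>E. \<Sum>x\<in>e. f x e) = (\<Sum>x\<in>V. \<Sum>e\<in>{e\<in>E. x \<in> e}. f x e)"
proof -
  have "(\<Sum>e\<in>E. \<Sum>x\<in>e. f x e) = (\<Sum>e\<in>E. \<Sum>x\<in>V. if x \<in> e then f x e else 0)"
  proof (rule sum.cong[OF refl])
    fix e assume "e \<in> E"
    then have "{x\<in>V. x \<in> e} = e" using edge_subset by blast
    then show "(\<Sum>x\<in>e. f x e) = (\<Sum>x\<in>V. if x \<in> e then f x e else 0)"
      using sum.inter_filter[OF finite_V, of "\<lambda>x. f x e" "\<lambda>x. x \<in> e"] by simp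
  qed
  also have "\<dots> = (\<Sum>x\<in>V. \<Sum>e\<in>E. if x \<in> e then f x e else 0)"
    by (rule sum.swap)
  also have "\<dots> = (\<Sum>x\<in>V. \<Sum>e\<in>{e\<in>E. x \<in> e}. f x e)"
    by (simp add: sum.inter_filter[OF finite_E])
  finally show ?thesis .
qed

lemma sum_edges_ends_eq_sum_deg_times: "(\<Sum>e\<in>E. \<Sum>x\<in>e. g x) = (\<Sum>x\<in>V. d x * g x)"
  using sum_edges_ends_eq_sum_verts[of "\<lambda>x e. g x"] by (simp add: deg_def)

lemma sum_edges_ends_deg_power: "(\<Sum>e\<in>E. \<Sum>x\<in>e. d x ^ k) = M1pow V E (Suc k)"
  by (simp add: sum_edges_ends_eq_sum_deg_times M1pow_def)

lemma sum_edges_ends_nbrs_deg_sum: "(\<Sum>e\<in>E. \<Sum>x\<in>e. nbrs_deg_sum x) = 2 * M2 E"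
proof -
  have nbrs_deg_sum_eq: "nbrs_deg_sum x = (\<Sum>e\<in>{e\<in>E. x \<in> e}. \<Sum>w\<in>e - {x}. d w)" for x
  proof -
    have "(\<Sum>e\<in>{e\<in>E. x \<in> e}. \<Sum>w\<in>e - {x}. d w) = (\<Sum>w\<in>nbrs x. \<Sum>w'\<in>{x, w} - {x}. d w')"
      using sum.reindex_bij_betw[OF bij_betw_nbrs_incident_edges, of "\<lambda>e. \<Sum>w\<in>e - {x}. d w"]
      by (simp only:)
    also have "\<dots> = nbrs_deg_sum x"
      unfolding nbrs_deg_sum_def
      by (rule sum.cong[OF refl]) (use not_mem_nbrs_self in \<open>auto simp: insert_Diff_if\<close>)
    finally show ?thesis ..
  qed
  have "(\<Sum>e\<in>E. \<Sum>x\<in>e. nbrs_deg_sum x) = (\<Sum>x\<in>V. \<Sum>e\<in>{e\<in>E. x \<in> e}. d x * (\<Sum>w\<in>e - {x}. d w))"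
    by (simp add: sum_edges_ends_eq_sum_deg_times nbrs_deg_sum_eq sum_distrib_left)
  also have "\<dots> = (\<Sum>e\<in>E. \<Sum>x\<in>e. d x * (\<Sum>w\<in>e - {x}. d w))"
    by (rule sum_edges_ends_eq_sum_verts[symmetric])
  also have "\<dots> = (\<Sum>e\<in>E. 2 * (\<Prod>x\<in>e. d x))"
    by (rule sum.cong[OF refl], erule edgeE) (simp add: insert_Diff_if algebra_simps)
  finally show ?thesis
    by (simp add: M2_def sum_distrib_left)
qed

lemma sum_edges_square_deg_sum: "(\<Sum>e\<in>E. (\<Sum>x\<in>e. d x)\<^sup>2) = Fidx V E + 2 * M2 E"
proof -
  have "(\<Sum>e\<in>E. (\<Sum>x\<in>e. d x)\<^sup>2) = (\<Sum>e\<in>E. (\<Sum>x\<in>e. d x ^ 2) + 2 * (\<Prod>x\<in>e. d x))"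
    by (rule sum.cong[OF refl], erule edgeE) (simp add: power2_eq_square algebra_simps)
  then show ?thesis
    by (simp add: sum.distrib sum_edges_ends_deg_power M2_def sum_distrib_left)
qed

lemma sum_edges_deg_sum_times_square_sum:
  "(\<Sum>e\<in>E. (\<Sum>x\<in>e. d x) * (\<Sum>x\<in>e. d x ^ 2)) = M1pow V E 4 + alpha_idx E"
proof -
  have "(\<Sum>e\<in>E. (\<Sum>x\<in>e. d x) * (\<Sum>x\<in>e. d x ^ 2))
      = (\<Sum>e\<in>E. (\<Sum>x\<in>e. d x ^ 3) + (\<Prod>x\<in>e. d x) * (\<Sum>x\<in>e. d x))"
    by (rule sum.cong[OF refl], erule edgeE) (simp add: power2_eq_square power3_eq_cube algebra_simps)
  then show ?thesis
    by (simp add: sum.distrib sum_edges_ends_deg_power alpha_idx_def)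
qed

lemma card_del_edge_ends:
  assumes "{u, v} \<in> E"
  shows "int (card (del_verts_E E {u, v})) = int (card E) - d u - d v + 1"
proof -
  let ?D = "del_verts_E E {u, v}" and ?A = "{f\<in>E. u \<in> f}" and ?B = "{f\<in>E. v \<in> f}"
  have "E = ?D \<union> (?A \<union> ?B)" "?D \<inter> (?A \<union> ?B) = {}"
    by (auto simp: del_verts_E_def)
  then have "card E = card ?D + card (?A \<union> ?B)"
    using finite_E by (metis card_Un_disjoint finite_Un)
  moreover have "?A \<inter> ?B = {{u, v}}"
    using assms edge_eq_if_mem[OF edge_distinct[OF assms]] by blast
  then have "card (?A \<union> ?B) + 1 = card ?A + card ?B"
    using card_Un_Int[of ?A ?B] finite_E by simp
  ultimately show ?thesis
    by (simp add: deg_def)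
qed

lemma incident_verts_pair: "incident_verts {u, v} = (nbrs u - {v}) \<union> (nbrs v - {u})"
  using nbrs_subset not_mem_nbrs_self
  by (auto simp: incident_verts_def mem_nbrs_iff[symmetric])

lemma simple_graph_del_verts: "simple_graph (del_verts_V V S) (del_verts_E E S)"
  using simple by (fastforce simp: simple_graph_def del_verts_V_def del_verts_E_def)

lemma gamma_idx_eq_sum_edges:
  "gamma_idx V E = (\<Sum>e\<in>E. (\<Sum>w\<in>incident_verts e. d w) * (\<Sum>x\<in>e. d x))"
proof -
  have Lambda_eq: "Lambda V E = (\<lambda>(e, v). (v, e)) ` (SIGMA e:E. incident_verts e)"
    by (auto simp: Lambda_def incident_verts_def image_iff)
  have "inj_on (\<lambda>(e, v). (v, e)) (SIGMA e:E. incident_verts e)"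
    by (auto simp: inj_on_def)
  then have "gamma_idx V E = (\<Sum>(e, v)\<in>(SIGMA e:E. incident_verts e). d v * (\<Sum>x\<in>e. d x))"
    unfolding gamma_idx_def Lambda_eq by (subst sum.reindex) (simp_all add: case_prod_beta comp_def)
  also have "\<dots> = (\<Sum>e\<in>E. \<Sum>v\<in>incident_verts e. d v * (\<Sum>x\<in>e. d x))"
    using finite_E finite_V by (subst sum.Sigma) (auto simp: incident_verts_def)
  finally show ?thesis
    by (simp add: sum_distrib_right)
qed

end

locale triangle_free_graph = finite_simple_graph +
  assumes girth: "girth_ge4 E"
begin

lemma no_triangle: "{x, y} \<in> E \<Longrightarrow> {y, z} \<in> E \<Longrightarrow> {x, z} \<in> E \<Longrightarrow> False"
  using girth edge_distinct unfolding girth_ge4_def by blast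

lemma disjoint_nbrs_edge_ends:
  assumes "{u, v} \<in> E"
  shows "(nbrs u - {v}) \<inter> (nbrs v - {u}) = {}"
  using no_triangle[of _ u v] assms by (fastforce simp: mem_nbrs_iff)

lemma card_incident_verts_edge:
  assumes "{u, v} \<in> E"
  shows "int (card (incident_verts {u, v})) = d u + d v - 2"
proof -
  have "v \<in> nbrs u" "u \<in> nbrs v"
    using assms by (simp_all add: mem_nbrs_iff insert_commute)
  then have "Suc (card (nbrs u - {v})) = deg E u" "Suc (card (nbrs v - {u})) = deg E v"
    using card_Suc_Diff1[OF finite_nbrs] by (simp_all add: card_nbrs)
  moreover have "card (incident_verts {u, v}) = card (nbrs u - {v}) + card (nbrs v - {u})"
    unfolding incident_verts_pair
    by (rule card_Un_disjoint[OF _ _ disjoint_nbrs_edge_ends[OF assms]]) (simp_all add: finite_nbrs)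
  ultimately show ?thesis
    by linarith
qed

lemma sum_incident_verts_edge:
  assumes "{u, v} \<in> E"
  shows "(\<Sum>w\<in>incident_verts {u, v}. d w) = nbrs_deg_sum u + nbrs_deg_sum v - d u - d v"
proof -
  have "v \<in> nbrs u" "u \<in> nbrs v"
    using assms by (simp_all add: mem_nbrs_iff insert_commute)
  have "(\<Sum>w\<in>incident_verts {u, v}. d w) = (\<Sum>w\<in>nbrs u - {v}. d w) + (\<Sum>w\<in>nbrs v - {u}. d w)"
    unfolding incident_verts_pair
    by (rule sum.union_disjoint[OF _ _ disjoint_nbrs_edge_ends[OF assms]]) (simp_all add: finite_nbrs)
  also have "\<dots> = nbrs_deg_sum u + nbrs_deg_sum v - d u - d v"
    using \<open>v \<in> nbrs u\<close> \<open>u \<in> nbrs v\<close> by (simp add: finite_nbrs sum_diff1 nbrs_deg_sum_def)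
  finally show ?thesis .
qed

lemma deg_del_edge_ends:
  assumes "{u, v} \<in> E" "w \<in> V - {u, v}"
  shows "int (deg (del_verts_E E {u, v}) w) = d w - (if w \<in> incident_verts {u, v} then 1 else 0)"
proof -
  interpret H: finite_simple_graph "del_verts_V V {u, v}" "del_verts_E E {u, v}"
    by (rule finite_simple_graph.intro, rule simple_graph_del_verts)
  have "H.nbrs w = nbrs w - {u, v}"
    using assms(2) unfolding H.nbrs_def nbrs_def by (auto simp: del_verts_E_def)
  then have "deg (del_verts_E E {u, v}) w = card (nbrs w) - card (nbrs w \<inter> {u, v})"
    by (simp add: H.card_nbrs[symmetric] card_Diff_subset_Int finite_nbrs)
  moreover have "card (nbrs w \<inter> {u, v}) \<le> card (nbrs w)"
    by (simp add: card_mono finite_nbrs)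
  moreover have "card (nbrs w \<inter> {u, v}) = (if w \<in> incident_verts {u, v} then 1 else 0)"
    using assms no_triangle[of w u v]
    by (cases "u \<in> nbrs w"; cases "v \<in> nbrs w")
       (auto simp: incident_verts_def mem_nbrs_iff insert_commute)
  ultimately show ?thesis
    by (simp add: card_nbrs of_nat_diff)
qed

lemma M1_del_edge_ends:
  assumes "{u, v} \<in> E"
  shows "M1 (del_verts_V V {u, v}) (del_verts_E E {u, v})
    = M1 V E - d u ^ 2 - d v ^ 2 - 2 * (\<Sum>w\<in>incident_verts {u, v}. d w) + int (card (incident_verts {u, v}))"
proof -
  let ?I = "incident_verts {u, v}" and ?W = "V - {u, v}"
  have "?I \<subseteq> ?W"
    by (auto simp: incident_verts_def)
  have "M1 (del_verts_V V {u, v}) (del_verts_E E {u, v}) = (\<Sum>w\<in>?W. (d w - (if w \<in> ?I then 1 else 0))\<^sup>2)"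
    unfolding M1pow_def del_verts_V_def using deg_del_edge_ends[OF assms] by simp
  also have "\<dots> = (\<Sum>w\<in>?W. d w ^ 2 - (if w \<in> ?I then 2 * d w - 1 else 0))"
    by (rule sum.cong) (simp_all add: power2_eq_square algebra_simps)
  also have "\<dots> = (\<Sum>w\<in>?W. d w ^ 2) - (\<Sum>w\<in>?W. if w \<in> ?I then 2 * d w - 1 else 0)"
    by (rule sum_subtractf)
  also have "(\<Sum>w\<in>?W. if w \<in> ?I then 2 * d w - 1 else 0) = (\<Sum>w\<in>?I. 2 * d w - 1)"
    using \<open>?I \<subseteq> ?W\<close> finite_V by (simp add: sum.If_cases Int_absorb1)
  also have "(\<Sum>w\<in>?W. d w ^ 2) = M1 V E - d u ^ 2 - d v ^ 2"
    using sum.subset_diff[of "{u, v}" V "\<lambda>w. d w ^ 2"] edge_subset[OF assms] edge_distinct[OF assms] finite_V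
    by (simp add: M1pow_def)
  finally show ?thesis
    by (simp add: sum_subtractf sum_distrib_left)
qed

lemma rho1_summand:
  assumes "e \<in> E"
  shows "int (card (del_verts_E E e)) * M1 (del_verts_V V e) (del_verts_E E e)
    = (int (card E) - (\<Sum>x\<in>e. d x) + 1)
      * (M1 V E - (\<Sum>x\<in>e. d x ^ 2) - 2 * (\<Sum>w\<in>incident_verts e. d w) + (\<Sum>x\<in>e. d x) - 2)"
proof -
  obtain u v where "u \<noteq> v" and e: "e = {u, v}"
    using assms by (auto elim: edgeE)
  with assms have uv: "{u, v} \<in> E"
    by simp
  show ?thesis
    unfolding e card_del_edge_ends[OF uv] M1_del_edge_ends[OF uv] card_incident_verts_edge[OF uv]
    using \<open>u \<noteq> v\<close> by (simp add: algebra_simps)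
qed

lemma sum_edges_incident_verts_deg: "(\<Sum>e\<in>E. \<Sum>w\<in>incident_verts e. d w) = 2 * M2 E - M1 V E"
proof -
  have "(\<Sum>e\<in>E. \<Sum>w\<in>incident_verts e. d w) = (\<Sum>e\<in>E. (\<Sum>x\<in>e. nbrs_deg_sum x) - (\<Sum>x\<in>e. d x))"
  proof (rule sum.cong[OF refl])
    fix e assume "e \<in> E"
    moreover from this obtain u v where "u \<noteq> v" "e = {u, v}"
      by (auto elim: edgeE)
    ultimately show "(\<Sum>w\<in>incident_verts e. d w) = (\<Sum>x\<in>e. nbrs_deg_sum x) - (\<Sum>x\<in>e. d x)"
      by (simp add: sum_incident_verts_edge)
  qed
  then show ?thesis
    using sum_edges_ends_deg_power[of 1, unfolded Suc_1 power_one_right]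
    by (simp add: sum_subtractf sum_edges_ends_nbrs_deg_sum)
qed

lemma rho1_eq:
  fixes m :: int
  defines "m \<equiv> int (card E)"
  shows "rho1 V E = (m^2 + 4*m + 5) * M1 V E - (m + 2) * Fidx V E - (4*m + 6) * M2 E
           + M1pow V E 4 - (M1 V E)^2 + alpha_idx E - 2*m^2 - 2*m + 2 * gamma_idx V E"
proof -
  let ?M = "M1 V E" and ?a = "\<lambda>e. \<Sum>x\<in>e. d x" and ?q = "\<lambda>e. \<Sum>x\<in>e. d x ^ 2"
    and ?t = "\<lambda>e. \<Sum>w\<in>incident_verts e. d w"
  have "rho1 V E = (\<Sum>e\<in>E. (m - ?a e + 1) * (?M - ?q e - 2 * ?t e + ?a e - 2))"
    unfolding rho1_def m_def by (rule sum.cong[OF refl]) (rule rho1_summand)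
  also have "\<dots> = (\<Sum>e\<in>E. (m + 1) * (?M - 2) - (m + 1) * ?q e - 2 * (m + 1) * ?t e
      + (m + 3 - ?M) * ?a e + ?a e * ?q e + 2 * (?t e * ?a e) - (?a e)\<^sup>2)"
    by (rule sum.cong[OF refl]) (simp add: algebra_simps power2_eq_square)
  also have "\<dots> = m * (m + 1) * (?M - 2) - (m + 1) * (\<Sum>e\<in>E. ?q e) - 2 * (m + 1) * (\<Sum>e\<in>E. ?t e)
      + (m + 3 - ?M) * (\<Sum>e\<in>E. ?a e) + (\<Sum>e\<in>E. ?a e * ?q e) + 2 * (\<Sum>e\<in>E. ?t e * ?a e)
      - (\<Sum>e\<in>E. (?a e)\<^sup>2)"
    by (simp add: sum.distrib sum_subtractf sum_distrib_left m_def)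
  also have "\<dots> = (m^2 + 4*m + 5) * M1 V E - (m + 2) * Fidx V E - (4*m + 6) * M2 E
           + M1pow V E 4 - (M1 V E)^2 + alpha_idx E - 2*m^2 - 2*m + 2 * gamma_idx V E"
    unfolding sum_edges_ends_deg_power[of 1, unfolded Suc_1 power_one_right]
      sum_edges_ends_deg_power[of 2, unfolded Suc_numeral, simplified]
      sum_edges_incident_verts_deg sum_edges_deg_sum_times_square_sum
      gamma_idx_eq_sum_edges[symmetric] sum_edges_square_deg_sum m_def
    by (simp add: algebra_simps power2_eq_square)
  finally show ?thesis .
qed

end

theorem lemma2p3:
  fixes V :: "'a set" and E :: "'a set set" and m :: int
  assumes "simple_graph V E"
    and "girth_ge4 E"
    and "m = int (card E)"
  shows "rho1 V E = (m^2 + 4*m + 5) * M1 V E - (m + 2) * Fidx V E - (4*m + 6) * M2 E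
           + M1pow V E 4 - (M1 V E)^2 + alpha_idx E - 2*m^2 - 2*m + 2 * gamma_idx V E"
proof -
  interpret triangle_free_graph V E
    using assms(1,2) by unfold_locales
  show ?thesis
    using rho1_eq assms(3) by simp
qed

end
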